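(* Let $\lambda,\mu\in C^1([-1,1])$ be positive functions with $\lambda(w)=\mu(-w)$ for all $w\in[-1,1]$, and let $b,c\in C([-1,1])$. Let $E=\{(z,w)\in[-1,1]^2:\ |z|\le |w|\}$. Then the system $$\lambda(w)L^{11}_w(z,w)+\lambda(z)L^{11}_z(z,w)=-\lambda'(z)L^{11}(z,w)-c(z)L^{12}(z,w),$$ $$\lambda(w)L^{12}_w(z,w)-\mu(z)L^{12}_z(z,w)=-b(z)L^{11}(z,w)+\mu'(z)L^{12}(z,w),$$ $$L^{11}(-w,w)=0,\qquad L^{12}(w,w)=h_1(w):=\frac{b(w)}{\lambda(w)+\mu(w)},$$ together with the system $$\mu(w)L^{22}_w(z,w)+\mu(z)L^{22}_z(z,w)=b(z)L^{21}(z,w)-\mu'(z)L^{22}(z,w),$$ $$\mu(w)L^{21}_w(z,w)-\lambda(z)L^{21}_z(z,w)=\lambda'(z)L^{21}(z,w)+c(z)L^{22}(z,w),$$ $$L^{22}(-w,w)=0,\qquad L^{21}(w,w)=h_2(w):=-\frac{c(w)}{\lambda(w)+\mu(w)},$$ posed on $E$, has a unique solution $L^{11},L^{12},L^{21},L^{22}\in C(E)$ (understood as solutions of the equivalent integral equations obtained by integrating along characteristics).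
   Context: $E$ is the union of $E_1=\{(z,w):0\le w\le 1,\ -w\le z\le w\}$ and $E_2=\{(z,w):-1\le w\le 0,\ w\le z\le -w\}$. *)

theory Defs
  imports "HOL-Analysis.Analysis"
begin

definition E_dom :: "(real \<times> real) set" where
  "E_dom = {(z, w). 0 \<le> w \<and> w \<le> 1 \<and> -w \<le> z \<and> z \<le> w}
         \<union> {(z, w). -1 \<le> w \<and> w \<le> 0 \<and> w \<le> z \<and> z \<le> -w}"

text \<open>A characteristic curve (within E) of the first-order operator
  a(w) d/dw + beta(z) d/dz, parametrised on [s0, s1]:
  z'(s) = beta(z(s)), w'(s) = a(w(s)).\<close>

definition char_curve ::
  "(real \<Rightarrow> real) \<Rightarrow> (real \<Rightarrow> real) \<Rightarrow> real \<Rightarrow> real \<Rightarrow> (real \<Rightarrow> real \<times> real) \<Rightarrow> bool" where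
  "char_curve a beta s0 s1 \<gamma> \<longleftrightarrow> s0 \<le> s1 \<and>
     (\<forall>s\<in>{s0..s1}. \<gamma> s \<in> E_dom \<and>
        ((\<lambda>t. fst (\<gamma> t)) has_real_derivative beta (fst (\<gamma> s))) (at s within {s0..s1}) \<and>
        ((\<lambda>t. snd (\<gamma> t)) has_real_derivative a (snd (\<gamma> s))) (at s within {s0..s1}))"

text \<open>L solves a(w) L_w + beta(z) L_z = F(z,w) in the sense of integration
  along characteristics: along every characteristic curve segment in E,
  the increment of L equals the integral of F.\<close>

definition solves_char ::
  "(real \<Rightarrow> real) \<Rightarrow> (real \<Rightarrow> real) \<Rightarrow> (real \<times> real \<Rightarrow> real) \<Rightarrow> (real \<times> real \<Rightarrow> real) \<Rightarrow> bool" where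
  "solves_char a beta F L \<longleftrightarrow>
     (\<forall>s0 s1 \<gamma>. char_curve a beta s0 s1 \<gamma> \<longrightarrow>
        L (\<gamma> s1) - L (\<gamma> s0) = integral {s0..s1} (\<lambda>s. F (\<gamma> s)))"

definition kernel_system ::
  "(real \<Rightarrow> real) \<Rightarrow> (real \<Rightarrow> real) \<Rightarrow> (real \<Rightarrow> real) \<Rightarrow> (real \<Rightarrow> real) \<Rightarrow>
   (real \<Rightarrow> real) \<Rightarrow> (real \<Rightarrow> real) \<Rightarrow>
   (real \<times> real \<Rightarrow> real) \<Rightarrow> (real \<times> real \<Rightarrow> real) \<Rightarrow>
   (real \<times> real \<Rightarrow> real) \<Rightarrow> (real \<times> real \<Rightarrow> real) \<Rightarrow> bool" where
  "kernel_system lam lam' mu mu' b c L11 L12 L21 L22 \<longleftrightarrow>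
     continuous_on E_dom L11 \<and> continuous_on E_dom L12 \<and>
     continuous_on E_dom L21 \<and> continuous_on E_dom L22 \<and>
     solves_char lam lam
       (\<lambda>p. - lam' (fst p) * L11 p - c (fst p) * L12 p) L11 \<and>
     solves_char lam (\<lambda>z. - mu z)
       (\<lambda>p. - b (fst p) * L11 p + mu' (fst p) * L12 p) L12 \<and>
     (\<forall>w\<in>{-1..1}. L11 (-w, w) = 0 \<and> L12 (w, w) = b w / (lam w + mu w)) \<and>
     solves_char mu mu
       (\<lambda>p. b (fst p) * L21 p - mu' (fst p) * L22 p) L22 \<and>
     solves_char mu (\<lambda>z. - lam z)
       (\<lambda>p. lam' (fst p) * L21 p + c (fst p) * L22 p) L21 \<and>
     (\<forall>w\<in>{-1..1}. L22 (-w, w) = 0 \<and> L21 (w, w) = - c w / (lam w + mu w))"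

end

theory Submission
  imports Defs
begin

text \<open>Let \<open>phi\<close> be the primitive of \<open>1 / lam\<close>. The characteristics of
  \<open>lam(w) \<partial>\<^sub>w + lam(z) \<partial>\<^sub>z\<close> are the curves along which \<open>phi z\<close> and \<open>phi w\<close> both increase at
  unit speed, and since \<open>mu z = lam (-z)\<close> the reflection \<open>z \<mapsto> -z\<close> carries the characteristics
  of \<open>lam(w) \<partial>\<^sub>w - mu(z) \<partial>\<^sub>z\<close> onto them. Every point of \<open>E\<close> lies on exactly one such
  characteristic issuing from the antidiagonal, so integrating along characteristics turns each
  half of the system into a fixed-point equation \<open>u = B + T u\<close> on \<open>E\<close>. The operator \<open>T\<close> is of
  Volterra type with respect to the weight \<open>\<theta>(z, w) = |phi w|\<close> (\<open>char_time\<close>): a bound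
  \<open>C \<theta>\<^sup>n / n!\<close> on \<open>u\<close> yields \<open>K C \<theta>\<^bsup>n+1\<^esup> / (n+1)!\<close> on \<open>T u\<close>. Hence the Picard iterates
  converge uniformly, and the difference of two solutions, being a fixed point of \<open>T\<close>, is
  dominated by every term of the exponential series of \<open>K \<theta>\<close> and vanishes.\<close>

section \<open>Volterra-type fixed-point equations\<close>

definition volterra_bounded ::
  "'a::topological_space set \<Rightarrow> ('a \<Rightarrow> real) \<Rightarrow> real \<Rightarrow> (('a \<Rightarrow> 'b::real_normed_vector) \<Rightarrow> 'a \<Rightarrow> 'b) \<Rightarrow> bool"
  where "volterra_bounded S \<theta> K T \<longleftrightarrow>
    (\<forall>u C n. continuous_on S u \<longrightarrow> 0 \<le> C \<longrightarrow> (\<forall>q\<in>S. norm (u q) \<le> C * \<theta> q ^ n / fact n) \<longrightarrow>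
       (\<forall>p\<in>S. norm (T u p) \<le> K * C * \<theta> p ^ Suc n / fact (Suc n)))"

lemma volterra_boundedD:
  assumes "volterra_bounded S \<theta> K T" "continuous_on S u" "0 \<le> C"
    "\<And>q. q \<in> S \<Longrightarrow> norm (u q) \<le> C * \<theta> q ^ n / fact n" "p \<in> S"
  shows "norm (T u p) \<le> K * C * \<theta> p ^ Suc n / fact (Suc n)"
  using assms unfolding volterra_bounded_def by blast

lemma volterra_iterates_bound:
  assumes T: "volterra_bounded S \<theta> K T" and K: "0 \<le> K" and C: "0 \<le> C"
    and f: "\<And>n. continuous_on S (f n)"
    and f0: "\<And>q. q \<in> S \<Longrightarrow> norm (f 0 q) \<le> C"
    and f_Suc: "\<And>n q. q \<in> S \<Longrightarrow> f (Suc n) q = T (f n) q"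
    and q: "q \<in> S"
  shows "norm (f n q) \<le> C * (K * \<theta> q) ^ n / fact n"
  using q
proof (induction n arbitrary: q)
  case 0
  then show ?case using f0 by simp
next
  case (Suc n)
  have "norm (f (Suc n) q) = norm (T (f n) q)" using f_Suc[OF Suc.prems] by simp
  also have "\<dots> \<le> K * (C * K ^ n) * \<theta> q ^ Suc n / fact (Suc n)"
    using Suc C K by (intro volterra_boundedD[OF T f]) (auto simp: power_mult_distrib mult.assoc)
  finally show ?case by (simp add: algebra_simps)
qed

lemma power_over_fact_tendsto_0: "(\<lambda>n. (x::real) ^ n / fact n) \<longlonglongrightarrow> 0"
  using summable_LIMSEQ_zero[OF summable_exp] by (simp add: inverse_eq_divide)

lemma volterra_fixed_point_eq_0:
  assumes S: "compact S" and T: "volterra_bounded S \<theta> K T" and K: "0 \<le> K"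
    and d: "continuous_on S d" and d_fix: "\<And>q. q \<in> S \<Longrightarrow> d q = T d q"
    and p: "p \<in> S"
  shows "d p = 0"
proof -
  obtain C where C: "0 \<le> C" "\<And>q. q \<in> S \<Longrightarrow> norm (d q) \<le> C"
    using compact_imp_bounded[OF compact_continuous_image[OF d S]]
    by (auto simp: bounded_pos intro: less_imp_le)
  have "norm (d p) \<le> C * ((K * \<theta> p) ^ n / fact n)" for n
    using volterra_iterates_bound[OF T K C(1), of "\<lambda>_. d"] d d_fix C(2) p by simp
  moreover have "(\<lambda>n. C * ((K * \<theta> p) ^ n / fact n)) \<longlonglongrightarrow> C * 0"
    by (intro tendsto_mult tendsto_const power_over_fact_tendsto_0)
  ultimately have "norm (d p) \<le> C * 0"
    by (intro LIMSEQ_le_const) auto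
  then show ?thesis by simp
qed

lemma volterra_bounded_tendsto:
  assumes \<theta>: "\<And>p. p \<in> S \<Longrightarrow> 0 \<le> \<theta> p \<and> \<theta> p \<le> \<Theta>"
    and K: "0 \<le> K" and T: "volterra_bounded S \<theta> K T"
    and T_diff: "\<And>u u' p. continuous_on S u \<Longrightarrow> continuous_on S u' \<Longrightarrow> p \<in> S \<Longrightarrow>
      T u p - T u' p = T (\<lambda>q. u q - u' q) p"
    and u: "\<And>n. continuous_on S (u n)" and U: "continuous_on S U"
    and lim: "uniform_limit S u U sequentially" and p: "p \<in> S"
  shows "(\<lambda>n. T (u n) p) \<longlonglongrightarrow> T U p"
proof (rule tendstoI)
  fix \<epsilon> :: real assume "\<epsilon> > 0"
  define e where "e = \<epsilon> / (K * \<Theta> + 1)"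
  have "0 \<le> K * \<Theta>" using \<theta>[OF p] K by simp
  with \<open>\<epsilon> > 0\<close> have e: "e > 0" "K * e * \<Theta> < \<epsilon>" by (auto simp: e_def field_simps)
  from lim e(1) have "\<forall>\<^sub>F n in sequentially. \<forall>q\<in>S. dist (u n q) (U q) < e"
    by (simp add: uniform_limit_iff)
  then show "\<forall>\<^sub>F n in sequentially. dist (T (u n) p) (T U p) < \<epsilon>"
  proof eventually_elim
    case (elim n)
    have "dist (T (u n) p) (T U p) = norm (T (\<lambda>q. u n q - U q) p)"
      by (simp add: dist_norm T_diff[OF u U p])
    also have "\<dots> \<le> K * e * \<theta> p ^ Suc 0 / fact (Suc 0)"
      using elim e(1) p
      by (intro volterra_boundedD[OF T]) (auto simp: dist_norm intro: continuous_on_diff u U less_imp_le)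
    also have "\<dots> \<le> K * e * \<Theta>" using \<theta>[OF p] K e(1) by (simp add: mult_left_mono)
    finally show ?case using e(2) by simp
  qed
qed

lemma volterra_fixed_point_unique:
  assumes S: "compact S" and T: "volterra_bounded S \<theta> K T" and K: "0 \<le> K"
    and T_diff: "\<And>u u' p. continuous_on S u \<Longrightarrow> continuous_on S u' \<Longrightarrow> p \<in> S \<Longrightarrow>
      T u p - T u' p = T (\<lambda>q. u q - u' q) p"
    and u: "continuous_on S u" "\<And>p. p \<in> S \<Longrightarrow> u p = B p + T u p"
    and u': "continuous_on S u'" "\<And>p. p \<in> S \<Longrightarrow> u' p = B p + T u' p"
    and p: "p \<in> S"
  shows "u' p = u p"
proof -
  have "u' p - u p = 0"
  proof (rule volterra_fixed_point_eq_0[OF S T K _ _ p])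
    show "continuous_on S (\<lambda>q. u' q - u q)" using u u' by (intro continuous_on_diff)
    show "u' q - u q = T (\<lambda>q. u' q - u q) q" if "q \<in> S" for q
      using u u' that T_diff[OF u'(1) u(1) that] by (auto simp: algebra_simps)
  qed
  then show ?thesis by simp
qed

text \<open>The successive differences of Picard iterates are iterates of the homogeneous operator,
  hence bounded by the terms of the exponential series of \<open>K \<Theta>\<close>; the Weierstrass test applies
  to their telescoping sum.\<close>

lemma volterra_iterates_converge:
  fixes T :: "('a::topological_space \<Rightarrow> 'b::banach) \<Rightarrow> 'a \<Rightarrow> 'b"
  assumes S: "compact S"
    and \<theta>: "\<And>p. p \<in> S \<Longrightarrow> 0 \<le> \<theta> p \<and> \<theta> p \<le> \<Theta>"
    and K: "0 \<le> K" and T: "volterra_bounded S \<theta> K T"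
    and T_diff: "\<And>u u' p. continuous_on S u \<Longrightarrow> continuous_on S u' \<Longrightarrow> p \<in> S \<Longrightarrow>
      T u p - T u' p = T (\<lambda>q. u q - u' q) p"
    and u_cont: "\<And>n. continuous_on S (u n)"
    and u_Suc: "\<And>n p. p \<in> S \<Longrightarrow> u (Suc n) p = B p + T (u n) p"
  shows "\<exists>U. uniform_limit S u U sequentially"
proof -
  define d where "d n = (\<lambda>p. u (Suc n) p - u n p)" for n
  have d_cont: "continuous_on S (d n)" for n
    unfolding d_def by (intro continuous_on_diff u_cont)
  have d_Suc: "d (Suc n) p = T (d n) p" if "p \<in> S" for n p
    using T_diff[OF u_cont u_cont that, of "Suc n" n] by (simp add: d_def u_Suc[OF that])
  obtain C where C: "0 \<le> C" "\<And>q. q \<in> S \<Longrightarrow> norm (d 0 q) \<le> C"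
    using compact_imp_bounded[OF compact_continuous_image[OF d_cont[of 0] S]]
    by (auto simp: bounded_pos intro: less_imp_le)
  define M where "M n = C * ((K * \<Theta>) ^ n / fact n)" for n
  have d_le_M: "norm (d n q) \<le> M n" if "q \<in> S" for n q
  proof -
    have "norm (d n q) \<le> C * (K * \<theta> q) ^ n / fact n"
      by (rule volterra_iterates_bound[where f=d, OF T K C(1) d_cont C(2) d_Suc that])
    also have "\<dots> \<le> M n" unfolding M_def using \<theta>[OF that] K C
      by (auto intro!: mult_left_mono divide_right_mono power_mono)
    finally show ?thesis .
  qed
  have "summable M" unfolding M_def
    using summable_exp[of "K * \<Theta>"] by (intro summable_mult) (simp add: inverse_eq_divide)
  then have "uniform_limit S (\<lambda>n x. \<Sum>i<n. d i x) (\<lambda>x. \<Sum>i. d i x) sequentially"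
    using Weierstrass_m_test d_le_M by blast
  from uniform_limit_add[OF uniform_limit_const this]
  have "uniform_limit S (\<lambda>n x. u 0 x + (\<Sum>i<n. d i x)) (\<lambda>x. u 0 x + (\<Sum>i. d i x)) sequentially" .
  moreover have "u 0 x + (\<Sum>i<n. d i x) = u n x" for n x
    using sum_lessThan_telescope[of "\<lambda>i. u i x" n] by (simp add: d_def)
  ultimately show ?thesis by auto
qed

lemma volterra_fixed_point_exists:
  fixes T :: "('a::topological_space \<Rightarrow> 'b::banach) \<Rightarrow> 'a \<Rightarrow> 'b"
  assumes S: "compact S"
    and \<theta>: "\<And>p. p \<in> S \<Longrightarrow> 0 \<le> \<theta> p \<and> \<theta> p \<le> \<Theta>"
    and K: "0 \<le> K" and T: "volterra_bounded S \<theta> K T"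
    and T_diff: "\<And>u u' p. continuous_on S u \<Longrightarrow> continuous_on S u' \<Longrightarrow> p \<in> S \<Longrightarrow>
      T u p - T u' p = T (\<lambda>q. u q - u' q) p"
    and T_cont: "\<And>u. continuous_on S u \<Longrightarrow> continuous_on S (T u)"
    and B: "continuous_on S B"
  shows "\<exists>U. continuous_on S U \<and> (\<forall>p\<in>S. U p = B p + T U p)"
proof -
  define u where "u = rec_nat B (\<lambda>n v p. B p + T v p)"
  have u_Suc: "u (Suc n) = (\<lambda>p. B p + T (u n) p)" for n
    by (simp add: u_def)
  have u_cont: "continuous_on S (u n)" for n
    by (induction n) (auto simp: u_def B T_cont intro!: continuous_on_add)
  have "\<exists>U. uniform_limit S u U sequentially"
    by (rule volterra_iterates_converge[OF S \<theta> K T]) (simp_all add: T_diff u_cont u_Suc)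
  then obtain U where lim: "uniform_limit S u U sequentially" ..
  have U_cont: "continuous_on S U"
    by (rule uniform_limit_theorem[OF _ lim]) (auto intro: always_eventually u_cont)
  have "U p = B p + T U p" if p: "p \<in> S" for p
  proof (rule LIMSEQ_unique)
    show "(\<lambda>n. u (Suc n) p) \<longlonglongrightarrow> U p"
      by (rule LIMSEQ_Suc[OF tendsto_uniform_limitI[OF lim p]])
    show "(\<lambda>n. u (Suc n) p) \<longlonglongrightarrow> B p + T U p"
      unfolding u_Suc using volterra_bounded_tendsto[OF \<theta> K T T_diff u_cont U_cont lim p]
      by (intro tendsto_add tendsto_const)
  qed
  with U_cont show ?thesis by blast
qed

lemma expanding_map_inverse:
  fixes f :: "real \<Rightarrow> real"
  assumes cont: "\<And>x. isCont f x" and c: "c > 0"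
    and slope: "\<And>a b. a \<le> b \<Longrightarrow> c * (b - a) \<le> f b - f a"
  shows "strict_mono f" and "f (inv f y) = y" and "inv f (f x) = x" and "isCont (inv f) y"
    and "strict_mono (inv f)"
proof -
  show mono: "strict_mono f"
  proof (rule strict_monoI)
    fix a b :: real assume "a < b"
    with slope[of a b] c show "f a < f b" by (smt (verit) mult_pos_pos)
  qed
  have "y \<in> range f" for y
  proof -
    define r where "r = (\<bar>y\<bar> + \<bar>f 0\<bar>) / c"
    have r: "r \<ge> 0" unfolding r_def using c by auto
    have "c * r = \<bar>y\<bar> + \<bar>f 0\<bar>" unfolding r_def using c by simp
    moreover have "c * r \<le> f r - f 0" "c * r \<le> f 0 - f (-r)" using slope[of 0 r] slope[of "-r" 0] r by auto
    ultimately have "f (-r) \<le> y" "y \<le> f r" by (smt (verit))+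
    then have "\<exists>x. -r \<le> x \<and> x \<le> r \<and> f x = y"
      using r cont by (intro IVT) auto
    then show ?thesis by auto
  qed
  then have surj: "surj f" by auto
  show f_inv_f: "f (inv f y) = y" for y using surj by (simp add: surj_f_inv_f)
  show inv_f_f: "inv f (f x) = x" for x using strict_mono_on_imp_inj_on[OF mono] by simp
  show "isCont (inv f) y"
    using isCont_inverse_function[where d=1 and f=f and x="inv f y"] inv_f_f cont
    by (simp add: f_inv_f)
  show "strict_mono (inv f)"
    by (rule strict_monoI) (metis f_inv_f mono strict_mono_less linorder_neqE_linordered_idom less_asym)
qed

definition signed_integral :: "(real \<Rightarrow> real) \<Rightarrow> real \<Rightarrow> real" where
  "signed_integral f t = integral {0..t} f - integral {t..0} f"

lemma signed_integral_0 [simp]: "signed_integral f 0 = 0"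
  by (simp add: signed_integral_def)

lemma signed_integral_nonneg_eq: "0 \<le> t \<Longrightarrow> signed_integral f t = integral {0..t} f"
  by (cases "t = 0") (simp_all add: signed_integral_def)

lemma signed_integral_nonpos_eq: "t \<le> 0 \<Longrightarrow> signed_integral f t = - integral {t..0} f"
  by (cases "t = 0") (simp_all add: signed_integral_def)

lemma continuous_on_integrable_real:
  "continuous_on UNIV f \<Longrightarrow> (f :: real \<Rightarrow> real) integrable_on {a..b}"
  by (rule integrable_continuous_real) (rule continuous_on_subset, auto)

lemma signed_integral_diff:
  assumes f: "continuous_on UNIV f" and ab: "a \<le> b"
  shows "signed_integral f b - signed_integral f a = integral {a..b} f"
proof -
  have combine: "integral {x..y} f + integral {y..z} f = integral {x..z} f" if "x \<le> y" "y \<le> z" for x y z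
    using Henstock_Kurzweil_Integration.integral_combine[OF that continuous_on_integrable_real[OF f]] .
  consider "0 \<le> a" | "a \<le> 0" "0 \<le> b" | "b \<le> 0" using ab by linarith
  then show ?thesis
    by cases (use combine[of 0 a b] combine[of a 0 b] combine[of a b 0] ab in
        \<open>simp_all add: signed_integral_nonneg_eq signed_integral_nonpos_eq\<close>)
qed

lemma signed_integral_minus:
  assumes "continuous_on UNIV f" "continuous_on UNIV g"
  shows "signed_integral f t - signed_integral g t = signed_integral (\<lambda>s. f s - g s) t"
  using continuous_on_integrable_real[OF assms(1)] continuous_on_integrable_real[OF assms(2)]
  by (simp add: signed_integral_def integral_diff)

lemma signed_integral_from_increment:
  assumes "X (max 0 t) - X (min 0 t) = integral {min 0 t..max 0 t} g"
  shows "X t = X 0 + signed_integral g t"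
  using assms by (cases "0 \<le> t")
    (simp_all add: signed_integral_nonneg_eq signed_integral_nonpos_eq max_def min_def)

lemma has_real_derivative_signed_integral:
  assumes f: "continuous_on UNIV f"
  shows "(signed_integral f has_real_derivative f x) (at x)"
proof -
  have "((\<lambda>y. integral {x-1..y} f) has_real_derivative f x) (at x within {x-1..x+1})"
    by (rule integral_has_real_derivative) (auto intro: continuous_on_subset[OF f])
  then have "((\<lambda>y. integral {x-1..y} f) has_real_derivative f x) (at x within {x-1<..<x+1})"
    by (rule has_field_derivative_subset) auto
  moreover have "at x within {x-1<..<x+1} = at x" by (rule at_within_open) auto
  ultimately have "((\<lambda>y. integral {x-1..y} f) has_real_derivative f x) (at x)"
    by metis
  from DERIV_add[OF this DERIV_const]
  have "((\<lambda>y. integral {x-1..y} f + signed_integral f (x-1)) has_real_derivative f x) (at x)"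
    by simp
  then show ?thesis
  proof (rule has_field_derivative_transform_within_open[of _ _ x "{x-1<..<x+1}"])
    fix y assume "y \<in> {x-1<..<x+1}"
    then show "integral {x - 1..y} f + signed_integral f (x - 1) = signed_integral f y"
      using signed_integral_diff[OF f, of "x-1" y] by simp
  qed auto
qed

lemma integral_rescale_unit:
  fixes f :: "real \<Rightarrow> real"
  assumes f: "continuous_on UNIV f" and t: "0 \<le> t"
  shows "integral {0..t} f = t * integral {0..1} (\<lambda>r. f (t * r))"
proof -
  have "((\<lambda>r. t *\<^sub>R f (t * r)) has_integral (integral {t * 0..t * 1} f)) {0..1}"
    by (rule has_integral_substitution[where c=0 and d=t])
       (use t in \<open>auto intro!: derivative_eq_intros continuous_on_subset[OF f]
          simp: mult_le_one mult_left_le\<close>)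
  then show ?thesis by (simp add: has_integral_iff)
qed

lemma signed_integral_rescale:
  assumes f: "continuous_on UNIV f"
  shows "signed_integral f t = t * integral {0..1} (\<lambda>r. f (t * r))"
proof (cases "0 \<le> t")
  case True
  then show ?thesis using integral_rescale_unit[OF f True] by (simp add: signed_integral_nonneg_eq)
next
  case False
  have f': "continuous_on UNIV (\<lambda>x. f (-x))"
    by (rule continuous_on_compose2[OF f]) (auto intro!: continuous_intros)
  have "integral {t..0} f = integral {-0..-t} (\<lambda>x. f (-x))"
    using Henstock_Kurzweil_Integration.integral_reflect_real[of 0 t f] by simp
  also have "\<dots> = - t * integral {0..1} (\<lambda>r. f (t * r))"
    using integral_rescale_unit[OF f', of "-t"] False by simp
  finally show ?thesis using False by (simp add: signed_integral_nonpos_eq)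
qed

text \<open>Rescaling to the fixed interval \<open>[0, 1]\<close> turns the variable upper limit into a parameter.\<close>

lemma continuous_on_signed_integral_param:
  fixes G :: "'a::topological_space \<times> real \<Rightarrow> real" and t :: "'a \<Rightarrow> real"
  assumes G: "continuous_on UNIV G" and t: "continuous_on UNIV t"
  shows "continuous_on UNIV (\<lambda>x. signed_integral (\<lambda>s. G (x, s)) (t x))"
proof -
  have "continuous_on UNIV (\<lambda>s. G (x, s))" for x
    by (rule continuous_on_compose2[OF G]) (auto intro: continuous_intros)
  then have eq: "signed_integral (\<lambda>s. G (x, s)) (t x) = t x * integral (cbox 0 1) (\<lambda>r. G (x, t x * r))" for x
    by (simp add: signed_integral_rescale)
  have "continuous_on (UNIV \<times> cbox 0 1) (\<lambda>y. G (fst y, t (fst y) * snd y))"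
    by (rule continuous_on_compose2[OF G]) (auto intro!: continuous_intros continuous_on_compose2[OF t])
  then have "continuous_on UNIV (\<lambda>x. integral (cbox 0 1) (\<lambda>r. G (x, t x * r)))"
    using integral_continuous_on_param[of UNIV 0 1 "\<lambda>x r. G (x, t x * r)"] by (simp add: case_prod_beta)
  then show ?thesis unfolding eq by (intro continuous_intros t)
qed

lemma abs_signed_integral_le:
  assumes g: "continuous_on UNIV g" and P: "continuous_on UNIV P"
    and bound: "\<And>s. s \<in> {min 0 t..max 0 t} \<Longrightarrow> \<bar>g s\<bar> \<le> P \<bar>s\<bar>"
  shows "\<bar>signed_integral g t\<bar> \<le> integral {0..\<bar>t\<bar>} P"
proof -
  have P_abs: "continuous_on UNIV (\<lambda>s. P \<bar>s\<bar>)"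
    by (rule continuous_on_compose2[OF P]) (auto intro: continuous_intros)
  note integrable = continuous_on_integrable_real[OF g] continuous_on_integrable_real[OF P_abs]
  show ?thesis
  proof (cases "0 \<le> t")
    case True
    then have "\<bar>signed_integral g t\<bar> = norm (integral {0..t} g)"
      by (simp add: signed_integral_nonneg_eq)
    also have "\<dots> \<le> integral {0..t} (\<lambda>s. P \<bar>s\<bar>)"
      by (rule integral_norm_bound_integral[OF integrable]) (use bound True in auto)
    also have "\<dots> = integral {0..t} P" by (rule integral_cong) auto
    finally show ?thesis using True by simp
  next
    case False
    then have "\<bar>signed_integral g t\<bar> = norm (integral {t..0} g)"
      by (simp add: signed_integral_nonpos_eq)
    also have "\<dots> \<le> integral {t..0} (\<lambda>s. P \<bar>s\<bar>)"
      by (rule integral_norm_bound_integral[OF integrable]) (use bound False in auto)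
    also have "\<dots> = integral {t..0} (\<lambda>s. P (- s))" by (rule integral_cong) auto
    also have "\<dots> = integral {0..-t} P"
      using Henstock_Kurzweil_Integration.integral_reflect_real[of "-t" 0 P] by simp
    finally show ?thesis using False by simp
  qed
qed

lemma integral_shifted_power_le:
  fixes a T D :: real
  assumes T: "0 \<le> T" and a: "0 \<le> a" and D: "0 \<le> D"
  shows "integral {0..T} (\<lambda>r. D * (a + r) ^ n / fact n) \<le> D * (a + T) ^ Suc n / fact (Suc n)"
proof -
  have "((\<lambda>r. D * (a + r) ^ n / fact n) has_integral
      (D * (a + T) ^ Suc n / fact (Suc n) - D * (a + 0) ^ Suc n / fact (Suc n))) {0..T}"
  proof (rule fundamental_theorem_of_calculus[OF T])
    fix x assume "x \<in> {0..T}"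
    show "((\<lambda>r. D * (a + r) ^ Suc n / fact (Suc n)) has_vector_derivative
        D * (a + x) ^ n / fact n) (at x within {0..T})"
      unfolding has_real_derivative_iff_has_vector_derivative[symmetric]
      by (rule derivative_eq_intros refl | simp add: fact_Suc)+
  qed
  then show ?thesis using a D by (simp add: has_integral_iff)
qed

section \<open>The domain \<open>E\<close>\<close>

lemma mem_E_dom_iff: "p \<in> E_dom \<longleftrightarrow> \<bar>fst p\<bar> \<le> \<bar>snd p\<bar> \<and> \<bar>snd p\<bar> \<le> 1"
  by (cases p) (auto simp: E_dom_def)

lemma compact_E_dom: "compact E_dom"
proof -
  have "E_dom = {p. \<bar>fst p\<bar> \<le> \<bar>snd p\<bar>} \<inter> {p. \<bar>snd p\<bar> \<le> 1}"
    by (auto simp: mem_E_dom_iff)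
  moreover have "closed ({p::real \<times> real. \<bar>fst p\<bar> \<le> \<bar>snd p\<bar>} \<inter> {p. \<bar>snd p\<bar> \<le> 1})"
    by (intro closed_Int closed_Collect_le continuous_intros)
  ultimately have "closed E_dom" by simp
  moreover have "E_dom \<subseteq> cbox (-1, -1) (1, 1)"
    by (auto simp: mem_E_dom_iff cbox_Pair_eq)
  ultimately show ?thesis
    using bounded_subset[OF bounded_cbox] by (simp add: compact_eq_bounded_closed)
qed

definition reflect :: "real \<times> real \<Rightarrow> real \<times> real" where
  "reflect p = (- fst p, snd p)"

lemma reflect_in_E_dom_iff [simp]: "reflect p \<in> E_dom \<longleftrightarrow> p \<in> E_dom"
  by (simp add: mem_E_dom_iff reflect_def)

lemma reflect_reflect [simp]: "reflect (reflect p) = p"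
  by (simp add: reflect_def)

lemma continuous_on_reflect [continuous_intros]:
  "continuous_on S f \<Longrightarrow> continuous_on S (\<lambda>x. reflect (f x))"
  unfolding reflect_def by (intro continuous_intros)

definition clip :: "real \<Rightarrow> real" where
  "clip x = max (-1) (min 1 x)"

lemma clip_in: "clip x \<in> {-1..1}"
  by (auto simp: clip_def)

lemma clip_eq: "x \<in> {-1..1} \<Longrightarrow> clip x = x"
  by (auto simp: clip_def)

lemma continuous_on_clip [continuous_intros]:
  "continuous_on S f \<Longrightarrow> continuous_on S (\<lambda>x. clip (f x))"
  unfolding clip_def by (intro continuous_intros)

definition retract_E :: "real \<times> real \<Rightarrow> real \<times> real" where
  "retract_E p = (let w = clip (snd p) in (max (- \<bar>w\<bar>) (min \<bar>w\<bar> (fst p)), w))"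

lemma retract_E_in_E_dom: "retract_E p \<in> E_dom"
  using clip_in[of "snd p"] by (auto simp: mem_E_dom_iff retract_E_def Let_def)

lemma retract_E_id: "p \<in> E_dom \<Longrightarrow> retract_E p = p"
  by (cases p) (auto simp: mem_E_dom_iff retract_E_def Let_def clip_def)

lemma snd_retract_E: "snd (retract_E p) = clip (snd p)"
  by (simp add: retract_E_def Let_def)

lemma continuous_on_retract_E [continuous_intros]:
  "continuous_on S f \<Longrightarrow> continuous_on S (\<lambda>x. retract_E (f x))"
  unfolding retract_E_def Let_def by (intro continuous_intros)

lemma continuous_on_compose_E_dom:
  assumes "continuous_on E_dom F" "continuous_on S f" "\<And>x. x \<in> S \<Longrightarrow> f x \<in> E_dom"
  shows "continuous_on S (\<lambda>x. F (f x))"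
  using continuous_on_compose2[OF assms(1,2)] assms(3) by blast

definition lin_comb ::
  "(real \<Rightarrow> real) \<Rightarrow> (real \<Rightarrow> real) \<Rightarrow> (real \<times> real \<Rightarrow> real \<times> real) \<Rightarrow> real \<times> real \<Rightarrow> real" where
  "lin_comb \<alpha> \<beta> u q = \<alpha> (fst q) * fst (u q) + \<beta> (fst q) * snd (u q)"

lemma continuous_on_lin_comb:
  assumes "continuous_on {-1..1} \<alpha>" "continuous_on {-1..1} \<beta>" "continuous_on E_dom u"
  shows "continuous_on E_dom (lin_comb \<alpha> \<beta> u)"
proof -
  have "continuous_on E_dom (\<lambda>q. \<gamma> (fst q))" if "continuous_on {-1..1} \<gamma>" for \<gamma>
    by (rule continuous_on_compose2[OF that continuous_on_fst[OF continuous_on_id]])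
       (auto simp: mem_E_dom_iff)
  then show ?thesis
    unfolding lin_comb_def using assms by (intro continuous_intros) auto
qed

lemma lin_comb_diff: "lin_comb \<alpha> \<beta> u q - lin_comb \<alpha> \<beta> u' q = lin_comb \<alpha> \<beta> (\<lambda>q. u q - u' q) q"
  by (simp add: lin_comb_def algebra_simps)

lemma abs_lin_comb_le:
  assumes "\<bar>\<alpha> (fst q)\<bar> + \<bar>\<beta> (fst q)\<bar> \<le> A"
  shows "\<bar>lin_comb \<alpha> \<beta> u q\<bar> \<le> A * norm (u q)"
proof -
  have "\<bar>fst (u q)\<bar> \<le> norm (u q)" "\<bar>snd (u q)\<bar> \<le> norm (u q)"
    using norm_fst_le[of "fst (u q)" "snd (u q)"] norm_snd_le[of "snd (u q)" "fst (u q)"] by auto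
  then have "\<bar>lin_comb \<alpha> \<beta> u q\<bar> \<le> \<bar>\<alpha> (fst q)\<bar> * norm (u q) + \<bar>\<beta> (fst q)\<bar> * norm (u q)"
    unfolding lin_comb_def
    by (intro order_trans[OF abs_triangle_ineq add_mono]) (auto simp: abs_mult intro!: mult_left_mono)
  also have "\<dots> \<le> A * norm (u q)" using assms by (metis distrib_right mult_right_mono norm_ge_zero)
  finally show ?thesis .
qed

section \<open>Characteristic coordinates\<close>

locale char_setting =
  fixes lam mu :: "real \<Rightarrow> real"
  assumes lam_pos: "\<forall>x\<in>{-1..1}. lam x > 0"
    and lam_cont: "continuous_on {-1..1} lam"
    and lam_mu: "\<forall>w\<in>{-1..1}. lam w = mu (- w)"
begin

text \<open>\<open>lam\<close> is extended constantly outside \<open>[-1, 1]\<close>, so that \<open>phi\<close> becomes a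
  homeomorphism of the whole line and \<open>char_point\<close> below is defined everywhere.\<close>

definition lam_ext :: "real \<Rightarrow> real" where
  "lam_ext x = lam (clip x)"

definition phi :: "real \<Rightarrow> real" where
  "phi = signed_integral (\<lambda>x. 1 / lam_ext x)"

definition phi_inv :: "real \<Rightarrow> real" where
  "phi_inv = inv phi"

definition phi_span :: "real \<Rightarrow> real" where
  "phi_span v = phi v - phi (- v)"

definition phi_span_inv :: "real \<Rightarrow> real" where
  "phi_span_inv = inv phi_span"

lemma lam_ext_eq: "x \<in> {-1..1} \<Longrightarrow> lam_ext x = lam x"
  by (simp add: lam_ext_def clip_eq)

lemma continuous_on_lam_ext: "continuous_on UNIV lam_ext"
  unfolding lam_ext_def
  by (rule continuous_on_compose2[OF lam_cont]) (auto intro: continuous_intros clip_in)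

lemma lam_ext_bounds:
  obtains m M where "0 < m" "\<And>x. m \<le> lam_ext x" "\<And>x. lam_ext x \<le> M"
proof -
  obtain x1 where x1: "x1 \<in> {-1..1}" "\<And>y. y \<in> {-1..1} \<Longrightarrow> lam x1 \<le> lam y"
    using continuous_attains_inf[OF compact_Icc _ lam_cont] by fastforce
  obtain x2 where x2: "x2 \<in> {-1..1}" "\<And>y. y \<in> {-1..1} \<Longrightarrow> lam y \<le> lam x2"
    using continuous_attains_sup[OF compact_Icc _ lam_cont] by fastforce
  show ?thesis
    by (rule that[of "lam x1" "lam x2"]) (use x1 x2 lam_pos clip_in in \<open>auto simp: lam_ext_def\<close>)
qed

lemma lam_ext_pos: "lam_ext x > 0"
  by (metis lam_ext_bounds order_less_le_trans)

lemma continuous_on_inverse_lam_ext: "continuous_on UNIV (\<lambda>x. 1 / lam_ext x)"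
  using lam_ext_pos by (intro continuous_intros continuous_on_lam_ext) (auto simp: less_imp_neq[symmetric])

lemma has_real_derivative_phi: "(phi has_real_derivative 1 / lam_ext x) (at x)"
  unfolding phi_def by (rule has_real_derivative_signed_integral[OF continuous_on_inverse_lam_ext])

lemma isCont_phi: "isCont phi x"
  using has_real_derivative_phi by (rule DERIV_isCont)

lemma phi_expanding:
  obtains c where "c > 0" "\<And>a b. a \<le> b \<Longrightarrow> c * (b - a) \<le> phi b - phi a"
proof -
  obtain m M where mM: "0 < m" "\<And>x. m \<le> lam_ext x" "\<And>x. lam_ext x \<le> M"
    using lam_ext_bounds by blast
  have "M > 0" using mM by (meson order_less_le_trans)
  have slope: "1 / M * (b - a) \<le> phi b - phi a" if "a \<le> b" for a b
  proof -
    have "integral {a..b} (\<lambda>x. 1 / M) \<le> integral {a..b} (\<lambda>x. 1 / lam_ext x)"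
      using mM lam_ext_pos \<open>M > 0\<close>
      by (intro integral_le continuous_on_integrable_real continuous_on_inverse_lam_ext)
         (auto intro!: divide_left_mono)
    then show ?thesis
      using that signed_integral_diff[OF continuous_on_inverse_lam_ext that] by (simp add: phi_def)
  qed
  show ?thesis by (rule that[of "1 / M"]) (use \<open>M > 0\<close> slope in auto)
qed

lemma phi_span_expanding:
  obtains c where "c > 0" "\<And>a b. a \<le> b \<Longrightarrow> c * (b - a) \<le> phi_span b - phi_span a"
proof -
  obtain c where c: "c > 0" "\<And>a b. a \<le> b \<Longrightarrow> c * (b - a) \<le> phi b - phi a"
    using phi_expanding by blast
  have "c * (b - a) \<le> phi_span b - phi_span a" if "a \<le> b" for a b
  proof -
    have "0 \<le> c * (b - a)" using c(1) that by simp
    then show ?thesis using c(2)[OF that] c(2)[of "-b" "-a"] that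
      unfolding phi_span_def by simp
  qed
  with c(1) show ?thesis using that by blast
qed

lemma isCont_phi_span: "isCont phi_span x"
  unfolding phi_span_def
  by (intro isCont_diff isCont_phi isCont_o2[OF _ isCont_phi]) simp

lemma phi_inverse:
  shows phi_phi_inv [simp]: "phi (phi_inv y) = y"
    and phi_inv_phi [simp]: "phi_inv (phi x) = x"
    and isCont_phi_inv: "isCont phi_inv y"
    and strict_mono_phi: "strict_mono phi"
    and strict_mono_phi_inv: "strict_mono phi_inv"
proof -
  obtain c where "c > 0" "\<And>a b. a \<le> b \<Longrightarrow> c * (b - a) \<le> phi b - phi a"
    using phi_expanding by blast
  note inverse = expanding_map_inverse[OF isCont_phi this, folded phi_inv_def]
  show "phi (phi_inv y) = y" "phi_inv (phi x) = x" "isCont phi_inv y" "strict_mono phi"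
    "strict_mono phi_inv" by (simp_all add: inverse)
qed

lemma phi_span_inverse:
  shows phi_span_phi_span_inv [simp]: "phi_span (phi_span_inv y) = y"
    and phi_span_inv_phi_span [simp]: "phi_span_inv (phi_span x) = x"
    and isCont_phi_span_inv: "isCont phi_span_inv y"
    and strict_mono_phi_span_inv: "strict_mono phi_span_inv"
proof -
  obtain c where "c > 0" "\<And>a b. a \<le> b \<Longrightarrow> c * (b - a) \<le> phi_span b - phi_span a"
    using phi_span_expanding by blast
  note inverse = expanding_map_inverse[OF isCont_phi_span this, folded phi_span_inv_def]
  show "phi_span (phi_span_inv y) = y" "phi_span_inv (phi_span x) = x" "isCont phi_span_inv y"
    "strict_mono phi_span_inv" by (simp_all add: inverse)
qed

lemma phi_le_cancel_iff [simp]: "phi a \<le> phi b \<longleftrightarrow> a \<le> b"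
  by (rule strict_mono_less_eq[OF strict_mono_phi])

lemma phi_inv_le_cancel_iff [simp]: "phi_inv a \<le> phi_inv b \<longleftrightarrow> a \<le> b"
  by (rule strict_mono_less_eq[OF strict_mono_phi_inv])

lemma le_phi_inv_iff: "x \<le> phi_inv y \<longleftrightarrow> phi x \<le> y"
  by (metis phi_inv_le_cancel_iff phi_inv_phi)

lemma phi_inv_le_iff: "phi_inv y \<le> x \<longleftrightarrow> y \<le> phi x"
  by (metis phi_inv_le_cancel_iff phi_inv_phi)

lemma phi_span_inv_le_cancel_iff [simp]: "phi_span_inv a \<le> phi_span_inv b \<longleftrightarrow> a \<le> b"
  by (rule strict_mono_less_eq[OF strict_mono_phi_span_inv])

lemma phi_0 [simp]: "phi 0 = 0"
  by (simp add: phi_def)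

lemma phi_nonneg_iff [simp]: "0 \<le> phi x \<longleftrightarrow> 0 \<le> x"
  using phi_le_cancel_iff[of 0 x] by simp

lemma phi_nonpos_iff [simp]: "phi x \<le> 0 \<longleftrightarrow> x \<le> 0"
  using phi_le_cancel_iff[of x 0] by simp

lemma phi_span_0 [simp]: "phi_span 0 = 0"
  by (simp add: phi_span_def)

lemma has_real_derivative_phi_inv: "(phi_inv has_real_derivative lam_ext (phi_inv y)) (at y)"
proof -
  have "(phi_inv has_real_derivative inverse (1 / lam_ext (phi_inv y))) (at y)"
    by (rule DERIV_inverse_function[where f=phi and a="y-1" and b="y+1"])
       (use has_real_derivative_phi lam_ext_pos[of "phi_inv y"] isCont_phi_inv in auto)
  then show ?thesis by simp
qed

lemma continuous_on_phi [continuous_intros]: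
  "continuous_on S f \<Longrightarrow> continuous_on S (\<lambda>x. phi (f x))"
  by (rule continuous_on_compose2[OF continuous_at_imp_continuous_on[OF ballI[OF isCont_phi]]]) auto

lemma continuous_on_phi_inv [continuous_intros]:
  "continuous_on S f \<Longrightarrow> continuous_on S (\<lambda>x. phi_inv (f x))"
  by (rule continuous_on_compose2[OF continuous_at_imp_continuous_on[OF ballI[OF isCont_phi_inv]]]) auto

lemma continuous_on_phi_span_inv [continuous_intros]:
  "continuous_on S f \<Longrightarrow> continuous_on S (\<lambda>x. phi_span_inv (f x))"
  by (rule continuous_on_compose2[OF continuous_at_imp_continuous_on[OF ballI[OF isCont_phi_span_inv]]]) auto

text \<open>A point of the plane is reached by exactly one characteristic issuing from the
  antidiagonal: \<open>char_point v t\<close> is where the characteristic through \<open>(-v, v)\<close> is at time \<open>t\<close>.\<close>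

definition char_point :: "real \<Rightarrow> real \<Rightarrow> real \<times> real" where
  "char_point v t = (phi_inv (phi (- v) + t), phi_inv (phi v + t))"

definition char_coords :: "real \<times> real \<Rightarrow> real \<times> real" where
  "char_coords p = (let v = phi_span_inv (phi (snd p) - phi (fst p)) in (v, phi (snd p) - phi v))"

lemma char_coords_char_point [simp]: "char_coords (char_point v t) = (v, t)"
proof -
  have "phi_span_inv (phi (phi_inv (phi v + t)) - phi (phi_inv (phi (- v) + t))) = v"
    using phi_span_inv_phi_span[of v] by (simp add: phi_span_def)
  then show ?thesis by (simp add: char_coords_def char_point_def Let_def)
qed

lemma char_point_char_coords:
  assumes "char_coords p = (v, t)"
  shows "char_point v t = p"
proof -
  have v: "v = phi_span_inv (phi (snd p) - phi (fst p))" and t: "t = phi (snd p) - phi v"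
    using assms by (auto simp: char_coords_def Let_def)
  have "phi v - phi (- v) = phi (snd p) - phi (fst p)"
    using phi_span_phi_span_inv unfolding phi_span_def v by blast
  then have "phi (- v) + t = phi (fst p)" "phi v + t = phi (snd p)" using t by linarith+
  then show ?thesis by (simp add: char_point_def prod_eq_iff)
qed

lemma char_point_0 [simp]: "char_point v 0 = (- v, v)"
  by (simp add: char_point_def)

lemma char_coords_antidiagonal [simp]: "char_coords (- w, w) = (w, 0)"
  using char_coords_char_point[of w 0] by simp

lemma phi_char_point:
  "phi (fst (char_point v t)) = phi (- v) + t" "phi (snd (char_point v t)) = phi v + t"
  by (simp_all add: char_point_def)

lemma continuous_on_char_point [continuous_intros]:
  "continuous_on S f \<Longrightarrow> continuous_on S g \<Longrightarrow> continuous_on S (\<lambda>x. char_point (f x) (g x))"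
  unfolding char_point_def by (intro continuous_intros)

lemma continuous_on_char_coords [continuous_intros]:
  "continuous_on S f \<Longrightarrow> continuous_on S (\<lambda>x. char_coords (f x))"
  unfolding char_coords_def Let_def by (intro continuous_intros)

lemma char_point_in_E_dom_cases:
  assumes p: "char_point v t \<in> E_dom"
  shows "(0 \<le> v \<and> v \<le> snd (char_point v t) \<and> 0 \<le> t) \<or> (snd (char_point v t) \<le> v \<and> v \<le> 0 \<and> t \<le> 0)"
proof -
  obtain z w where zw: "char_point v t = (z, w)" by force
  have "phi z = phi (- v) + t" "phi w = phi v + t"
    using phi_char_point[of v t] by (simp_all add: zw)
  then have span: "phi_span v = phi w - phi z" and t: "t = phi w - phi v"
    by (simp_all add: phi_span_def)
  have "\<bar>z\<bar> \<le> \<bar>w\<bar>" using p by (simp add: zw mem_E_dom_iff)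
  then consider "0 \<le> w" "- w \<le> z" "z \<le> w" | "w \<le> 0" "w \<le> z" "z \<le> - w" by linarith
  then show ?thesis
  proof cases
    case 1
    then have "phi_span 0 \<le> phi_span v" "phi_span v \<le> phi_span w"
      by (simp_all add: span phi_span_def[of w])
    then have "0 \<le> v" "v \<le> w"
      by (metis phi_span_inv_le_cancel_iff phi_span_inv_phi_span)+
    then show ?thesis unfolding zw snd_conv by (simp add: t)
  next
    case 2
    then have "phi_span v \<le> phi_span 0" "phi_span w \<le> phi_span v"
      by (simp_all add: span phi_span_def[of w])
    then have "v \<le> 0" "w \<le> v"
      by (metis phi_span_inv_le_cancel_iff phi_span_inv_phi_span)+
    then show ?thesis unfolding zw snd_conv by (simp add: t)
  qed
qed

lemma char_point_in_E_dom_foot: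
  assumes "char_point v t \<in> E_dom"
  shows "v \<in> {-1..1}"
  using char_point_in_E_dom_cases[OF assms] assms by (auto simp: mem_E_dom_iff)

lemma char_point_segment_in_E_dom:
  assumes p: "char_point v t \<in> E_dom" and s: "s \<in> {min 0 t..max 0 t}"
  shows "char_point v s \<in> E_dom"
proof -
  define z w where "z = fst (char_point v s)" and "w = snd (char_point v s)"
  have w_t: "\<bar>snd (char_point v t)\<bar> \<le> 1" using p by (simp add: mem_E_dom_iff)
  from char_point_in_E_dom_cases[OF p] have "\<bar>z\<bar> \<le> \<bar>w\<bar> \<and> \<bar>w\<bar> \<le> 1"
  proof
    assume "0 \<le> v \<and> v \<le> snd (char_point v t) \<and> 0 \<le> t"
    with s have "v \<le> w" "w \<le> snd (char_point v t)" "- v \<le> z" "z \<le> w"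
      by (auto simp: z_def w_def char_point_def le_phi_inv_iff)
    with w_t show ?thesis by linarith
  next
    assume "snd (char_point v t) \<le> v \<and> v \<le> 0 \<and> t \<le> 0"
    with s have "w \<le> v" "snd (char_point v t) \<le> w" "z \<le> - v" "w \<le> z"
      by (auto simp: z_def w_def char_point_def phi_inv_le_iff)
    with w_t show ?thesis by linarith
  qed
  then show ?thesis by (simp add: mem_E_dom_iff z_def w_def)
qed

section \<open>Integration along characteristics\<close>

lemma phi_along_char_curve:
  assumes f: "\<forall>s\<in>{s0..s1}. (f has_real_derivative lam (f s)) (at s within {s0..s1})"
    and f_in: "\<forall>s\<in>{s0..s1}. f s \<in> {-1..1}" and s: "s \<in> {s0..s1}"
  shows "phi (f s) = phi (f s0) + (s - s0)"
proof -
  have "((\<lambda>s. phi (f s) - s) has_real_derivative 0) (at x within {s0..s1})" if x: "x \<in> {s0..s1}" for x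
  proof -
    have "((\<lambda>s. phi (f s)) has_real_derivative 1 / lam_ext (f x) * lam (f x)) (at x within {s0..s1})"
      by (rule DERIV_chain'[OF f[rule_format, OF x] has_real_derivative_phi])
    moreover have "1 / lam_ext (f x) * lam (f x) = 1"
      using f_in x lam_ext_eq[of "f x"] lam_ext_pos[of "f x"] by simp
    ultimately show ?thesis using DERIV_diff[OF _ DERIV_ident] by fastforce
  qed
  then obtain c where "\<forall>x\<in>{s0..s1}. phi (f x) - x = c"
    using has_field_derivative_zero_constant[OF convex_real_interval(5)] by blast
  then have "phi (f s) - s = c" "phi (f s0) - s0 = c" using s by auto
  then show ?thesis by linarith
qed

lemma char_curve_eq_char_point:
  assumes \<gamma>: "char_curve lam lam s0 s1 \<gamma>" and s: "s \<in> {s0..s1}"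
    and coords: "char_coords (\<gamma> s0) = (v, t0)"
  shows "\<gamma> s = char_point v (t0 + (s - s0))"
proof -
  have \<gamma>0: "char_point v t0 = \<gamma> s0" by (rule char_point_char_coords[OF coords])
  have in_I: "\<forall>x\<in>{s0..s1}. fst (\<gamma> x) \<in> {-1..1}" "\<forall>x\<in>{s0..s1}. snd (\<gamma> x) \<in> {-1..1}"
    using \<gamma> by (auto simp: char_curve_def mem_E_dom_iff)
  have "phi (fst (\<gamma> s)) = phi (fst (\<gamma> s0)) + (s - s0)"
    by (rule phi_along_char_curve[OF _ in_I(1) s]) (use \<gamma> in \<open>simp add: char_curve_def\<close>)
  moreover have "phi (snd (\<gamma> s)) = phi (snd (\<gamma> s0)) + (s - s0)"
    by (rule phi_along_char_curve[OF _ in_I(2) s]) (use \<gamma> in \<open>simp add: char_curve_def\<close>)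
  ultimately have "phi (fst (\<gamma> s)) = phi (- v) + (t0 + (s - s0))"
    "phi (snd (\<gamma> s)) = phi v + (t0 + (s - s0))"
    using phi_char_point[of v t0] by (simp_all add: \<gamma>0)
  then show ?thesis by (metis char_point_def phi_inv_phi prod.collapse)
qed

lemma char_curve_char_point:
  assumes p: "char_point v t \<in> E_dom"
  shows "char_curve lam lam (min 0 t) (max 0 t) (char_point v)"
  unfolding char_curve_def
proof (intro conjI ballI)
  fix s assume s: "s \<in> {min 0 t..max 0 t}"
  show in_E: "char_point v s \<in> E_dom" by (rule char_point_segment_in_E_dom[OF p s])
  have "((\<lambda>s. phi_inv (phi (- v) + s)) has_real_derivative lam_ext (fst (char_point v s))) (at s)"
    "((\<lambda>s. phi_inv (phi v + s)) has_real_derivative lam_ext (snd (char_point v s))) (at s)"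
    by (auto intro!: DERIV_chain2[OF has_real_derivative_phi_inv, THEN DERIV_cong] derivative_eq_intros
        simp: char_point_def)
  moreover have "lam_ext (fst (char_point v s)) = lam (fst (char_point v s))"
    "lam_ext (snd (char_point v s)) = lam (snd (char_point v s))"
    using in_E by (auto simp: mem_E_dom_iff intro!: lam_ext_eq)
  ultimately show
    "((\<lambda>t. fst (char_point v t)) has_real_derivative lam (fst (char_point v s))) (at s within {min 0 t..max 0 t})"
    "((\<lambda>t. snd (char_point v t)) has_real_derivative lam (snd (char_point v s))) (at s within {min 0 t..max 0 t})"
    by (auto simp: char_point_def has_field_derivative_at_within)
qed simp

lemma char_curve_reflect_iff:
  "char_curve lam (\<lambda>z. - mu z) s0 s1 \<gamma> \<longleftrightarrow> char_curve lam lam s0 s1 (\<lambda>s. reflect (\<gamma> s))"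
proof -
  have "((\<lambda>t. fst (\<gamma> t)) has_real_derivative - mu (fst (\<gamma> s))) (at s within S) \<longleftrightarrow>
        ((\<lambda>t. - fst (\<gamma> t)) has_real_derivative lam (- fst (\<gamma> s))) (at s within S)"
    if "\<gamma> s \<in> E_dom" for s S
  proof -
    have "lam (- fst (\<gamma> s)) = mu (fst (\<gamma> s))"
      using lam_mu[rule_format, of "- fst (\<gamma> s)"] that unfolding mem_E_dom_iff by force
    then show ?thesis
      using DERIV_minus[of "\<lambda>t. fst (\<gamma> t)" "- mu (fst (\<gamma> s))" s S]
        DERIV_minus[of "\<lambda>t. - fst (\<gamma> t)" "lam (- fst (\<gamma> s))" s S] by auto
  qed
  then show ?thesis
    unfolding char_curve_def reflect_def by (auto simp: mem_E_dom_iff)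
qed

lemma solves_char_reflect_iff:
  "solves_char lam (\<lambda>z. - mu z) F L \<longleftrightarrow> solves_char lam lam (\<lambda>p. F (reflect p)) (\<lambda>p. L (reflect p))"
  unfolding solves_char_def
proof (intro iffI allI impI)
  fix s0 s1 \<gamma> assume "char_curve lam lam s0 s1 \<gamma>"
  then have "char_curve lam (\<lambda>z. - mu z) s0 s1 (\<lambda>s. reflect (\<gamma> s))"
    by (simp add: char_curve_reflect_iff)
  moreover assume "\<forall>s0 s1 \<gamma>. char_curve lam (\<lambda>z. - mu z) s0 s1 \<gamma> \<longrightarrow>
    L (\<gamma> s1) - L (\<gamma> s0) = integral {s0..s1} (\<lambda>s. F (\<gamma> s))"
  ultimately show "L (reflect (\<gamma> s1)) - L (reflect (\<gamma> s0)) = integral {s0..s1} (\<lambda>s. F (reflect (\<gamma> s)))"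
    by blast
next
  fix s0 s1 \<gamma> assume "char_curve lam (\<lambda>z. - mu z) s0 s1 \<gamma>"
  then have "char_curve lam lam s0 s1 (\<lambda>s. reflect (\<gamma> s))"
    by (simp add: char_curve_reflect_iff)
  moreover assume "\<forall>s0 s1 \<gamma>. char_curve lam lam s0 s1 \<gamma> \<longrightarrow>
    L (reflect (\<gamma> s1)) - L (reflect (\<gamma> s0)) = integral {s0..s1} (\<lambda>s. F (reflect (\<gamma> s)))"
  ultimately show "L (\<gamma> s1) - L (\<gamma> s0) = integral {s0..s1} (\<lambda>s. F (\<gamma> s))"
    by fastforce
qed

text \<open>The
  retraction onto \<open>E\<close> changes nothing for \<open>p \<in> E\<close>, but makes the integrand continuous
  on the whole line when \<open>F\<close> is only continuous on \<open>E\<close>.\<close>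

definition char_integral :: "(real \<times> real \<Rightarrow> real) \<Rightarrow> real \<times> real \<Rightarrow> real" where
  "char_integral F p = signed_integral (\<lambda>s. F (retract_E (char_point (fst (char_coords p)) s)))
     (snd (char_coords p))"

lemma char_integral_char_point [simp]:
  "char_integral F (char_point v t) = signed_integral (\<lambda>s. F (retract_E (char_point v s))) t"
  by (simp add: char_integral_def)

lemma char_integral_antidiagonal [simp]: "char_integral F (- w, w) = 0"
  by (simp add: char_integral_def)

lemma continuous_on_char_integrand:
  "continuous_on E_dom F \<Longrightarrow> continuous_on UNIV (\<lambda>s. F (retract_E (char_point v s)))"
  by (rule continuous_on_compose_E_dom) (auto intro!: continuous_intros simp: retract_E_in_E_dom)

lemma continuous_on_char_integral:
  assumes F: "continuous_on E_dom F"
  shows "continuous_on S (char_integral F)"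
proof -
  have "continuous_on UNIV (\<lambda>x. F (retract_E (char_point (fst (char_coords (fst x))) (snd x))))"
    by (rule continuous_on_compose_E_dom[OF F]) (auto intro!: continuous_intros simp: retract_E_in_E_dom)
  then have "continuous_on UNIV (char_integral F)"
    unfolding char_integral_def
    by (intro continuous_on_signed_integral_param[where G="\<lambda>x. F (retract_E (char_point (fst (char_coords (fst x))) (snd x)))", simplified])
       (auto intro!: continuous_intros)
  then show ?thesis by (rule continuous_on_subset) simp
qed

lemma char_integral_diff:
  assumes "continuous_on E_dom F" "continuous_on E_dom G"
  shows "char_integral F p - char_integral G p = char_integral (\<lambda>q. F q - G q) p"
  unfolding char_integral_def
  by (rule signed_integral_minus[OF continuous_on_char_integrand continuous_on_char_integrand])
     (fact assms)+

lemma solves_char_iff_char_integral: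
  assumes F: "continuous_on E_dom F"
  shows "solves_char lam lam F L \<longleftrightarrow>
    (\<forall>v t. char_point v t \<in> E_dom \<longrightarrow> L (char_point v t) = L (- v, v) + char_integral F (char_point v t))"
proof (intro iffI allI impI)
  fix v t assume L: "solves_char lam lam F L" and p: "char_point v t \<in> E_dom"
  have "L (char_point v (max 0 t)) - L (char_point v (min 0 t)) =
      integral {min 0 t..max 0 t} (\<lambda>s. F (char_point v s))"
    using L char_curve_char_point[OF p] unfolding solves_char_def by blast
  also have "\<dots> = integral {min 0 t..max 0 t} (\<lambda>s. F (retract_E (char_point v s)))"
    by (intro integral_cong) (simp add: retract_E_id char_point_segment_in_E_dom[OF p])
  finally show "L (char_point v t) = L (- v, v) + char_integral F (char_point v t)"
    using signed_integral_from_increment[where X="\<lambda>s. L (char_point v s)"] by simp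
next
  assume L: "\<forall>v t. char_point v t \<in> E_dom \<longrightarrow> L (char_point v t) = L (- v, v) + char_integral F (char_point v t)"
  show "solves_char lam lam F L"
    unfolding solves_char_def
  proof (intro allI impI)
    fix s0 s1 \<gamma> assume \<gamma>: "char_curve lam lam s0 s1 \<gamma>"
    obtain v t0 where coords: "char_coords (\<gamma> s0) = (v, t0)" by force
    define g where "g = (\<lambda>s. F (retract_E (char_point v s)))"
    have g: "continuous_on UNIV g" unfolding g_def by (rule continuous_on_char_integrand[OF F])
    have s01: "s0 \<le> s1" using \<gamma> by (simp add: char_curve_def)
    have \<gamma>_eq: "\<gamma> s = char_point v (t0 + (s - s0))" if "s \<in> {s0..s1}" for s
      by (rule char_curve_eq_char_point[OF \<gamma> that coords])
    have \<gamma>_E: "\<gamma> s \<in> E_dom" if "s \<in> {s0..s1}" for s using \<gamma> that by (simp add: char_curve_def)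
    have L_\<gamma>: "L (\<gamma> s) = L (- v, v) + signed_integral g (t0 + (s - s0))" if "s \<in> {s0..s1}" for s
      using L \<gamma>_eq[OF that] \<gamma>_E[OF that] by (simp add: g_def)
    have "L (\<gamma> s1) - L (\<gamma> s0) = signed_integral g (t0 + (s1 - s0)) - signed_integral g t0"
      using L_\<gamma>[of s1] L_\<gamma>[of s0] s01 by simp
    also have "\<dots> = integral {t0..t0 + (s1 - s0)} g" using signed_integral_diff[OF g] s01 by simp
    also have "\<dots> = integral {s0..s1} (\<lambda>s. g (s + (t0 - s0)))"
      using integral_shift_real_ivl[of t0 "t0 - s0" "t0 + (s1 - s0)" g] by simp
    also have "\<dots> = integral {s0..s1} (\<lambda>s. F (\<gamma> s))"
    proof (rule integral_cong)
      fix s assume s: "s \<in> {s0..s1}"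
      have "char_point v (s + (t0 - s0)) = \<gamma> s" by (simp add: \<gamma>_eq[OF s] algebra_simps)
      then show "g (s + (t0 - s0)) = F (\<gamma> s)" by (simp add: g_def retract_E_id \<gamma>_E[OF s])
    qed
    finally show "L (\<gamma> s1) - L (\<gamma> s0) = integral {s0..s1} (\<lambda>s. F (\<gamma> s))" .
  qed
qed

lemma antidiagonal_in_E_dom: "w \<in> {-1..1} \<Longrightarrow> (- w, w) \<in> E_dom"
  by (auto simp: mem_E_dom_iff)

lemma solves_char_boundary_iff:
  assumes F: "continuous_on E_dom F"
  shows "solves_char lam lam F L \<and> (\<forall>w\<in>{-1..1}. L (- w, w) = g w) \<longleftrightarrow>
    (\<forall>p\<in>E_dom. L p = g (clip (fst (char_coords p))) + char_integral F p)"
proof (intro iffI conjI ballI)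
  fix p assume L: "solves_char lam lam F L \<and> (\<forall>w\<in>{-1..1}. L (- w, w) = g w)" and p: "p \<in> E_dom"
  obtain v t where coords: "char_coords p = (v, t)" by force
  note p_eq = char_point_char_coords[OF coords]
  have v: "v \<in> {-1..1}" using char_point_in_E_dom_foot[of v t] p by (simp add: p_eq)
  show "L p = g (clip (fst (char_coords p))) + char_integral F p"
    using L p v unfolding solves_char_iff_char_integral[OF F] by (auto simp: p_eq[symmetric] clip_eq)
next
  assume L: "\<forall>p\<in>E_dom. L p = g (clip (fst (char_coords p))) + char_integral F p"
  show boundary: "L (- w, w) = g w" if "w \<in> {-1..1}" for w
    using L antidiagonal_in_E_dom[OF that] that by (simp add: clip_eq)
  show "solves_char lam lam F L"
    unfolding solves_char_iff_char_integral[OF F]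
    using L boundary char_point_in_E_dom_foot by (simp add: clip_eq)
qed

lemma solves_char_reflect_boundary_iff:
  assumes F: "continuous_on E_dom F"
  shows "solves_char lam (\<lambda>z. - mu z) F L \<and> (\<forall>w\<in>{-1..1}. L (w, w) = h w) \<longleftrightarrow>
    (\<forall>p\<in>E_dom. L p = h (clip (fst (char_coords (reflect p)))) + char_integral (\<lambda>q. F (reflect q)) (reflect p))"
proof -
  have F': "continuous_on E_dom (\<lambda>q. F (reflect q))"
    by (rule continuous_on_compose_E_dom[OF F]) (auto intro: continuous_intros)
  have "(\<forall>p\<in>E_dom. L (reflect p) = h (clip (fst (char_coords p))) + char_integral (\<lambda>q. F (reflect q)) p) \<longleftrightarrow>
    (\<forall>p\<in>E_dom. L p = h (clip (fst (char_coords (reflect p)))) + char_integral (\<lambda>q. F (reflect q)) (reflect p))"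
    by (metis reflect_in_E_dom_iff reflect_reflect)
  moreover have "(- w, w) = reflect (w, w)" for w :: real by (simp add: reflect_def)
  ultimately show ?thesis
    using solves_char_boundary_iff[OF F', of "\<lambda>p. L (reflect p)" h]
    by (simp add: solves_char_reflect_iff)
qed

definition char_time :: "real \<times> real \<Rightarrow> real" where
  "char_time p = \<bar>phi (snd p)\<bar>"

lemma char_time_nonneg: "0 \<le> char_time p"
  by (simp add: char_time_def)

lemma char_time_reflect [simp]: "char_time (reflect p) = char_time p"
  by (simp add: char_time_def reflect_def)

lemma char_time_retract_E_le: "char_time (retract_E p) \<le> char_time p"
proof -
  have "\<bar>phi (clip x)\<bar> \<le> \<bar>phi x\<bar>" for x
    by (cases "0 \<le> x") (auto simp: clip_def max_def min_def)
  then show ?thesis by (simp add: char_time_def snd_retract_E)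
qed

lemma char_time_le:
  assumes "p \<in> E_dom"
  shows "char_time p \<le> \<bar>phi 1\<bar> + \<bar>phi (- 1)\<bar>"
proof -
  have "phi (- 1) \<le> phi (snd p)" "phi (snd p) \<le> phi 1"
    using assms by (simp_all add: mem_E_dom_iff abs_le_iff)
  moreover have "phi (- 1) \<le> 0" "0 \<le> phi 1" by simp_all
  ultimately show ?thesis unfolding char_time_def by linarith
qed

text \<open>Along the characteristic through \<open>p\<close>, \<open>char_time\<close> grows linearly in the time parameter
  starting from the antidiagonal, so integrating a bound of order \<open>n\<close> gains one order.\<close>

lemma abs_char_integral_le:
  assumes F: "continuous_on E_dom F" and D: "0 \<le> D"
    and bound: "\<And>q. q \<in> E_dom \<Longrightarrow> \<bar>F q\<bar> \<le> D * char_time q ^ n / fact n"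
    and p: "p \<in> E_dom"
  shows "\<bar>char_integral F p\<bar> \<le> D * char_time p ^ Suc n / fact (Suc n)"
proof -
  obtain v t where coords: "char_coords p = (v, t)" by force
  note p_eq = char_point_char_coords[OF coords, symmetric]
  define a where "a = \<bar>phi v\<bar>"
  have "(0 \<le> phi v \<and> 0 \<le> t) \<or> (phi v \<le> 0 \<and> t \<le> 0)"
    using char_point_in_E_dom_cases[of v t] p by (auto simp: p_eq)
  then have time: "char_time (char_point v s) = a + \<bar>s\<bar>" if "s \<in> {min 0 t..max 0 t}" for s
    using that by (auto simp del: phi_nonneg_iff phi_nonpos_iff simp: char_time_def phi_char_point a_def abs_if)
  define P where "P r = D * (a + r) ^ n / fact n" for r
  have "\<bar>char_integral F p\<bar> \<le> integral {0..\<bar>t\<bar>} P"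
    unfolding p_eq char_integral_char_point
  proof (rule abs_signed_integral_le[OF continuous_on_char_integrand[OF F]])
    show "continuous_on UNIV P" unfolding P_def by (intro continuous_intros) auto
    fix s assume s: "s \<in> {min 0 t..max 0 t}"
    have "\<bar>F (retract_E (char_point v s))\<bar> \<le> D * char_time (retract_E (char_point v s)) ^ n / fact n"
      by (rule bound[OF retract_E_in_E_dom])
    also have "\<dots> \<le> D * char_time (char_point v s) ^ n / fact n"
      using D char_time_retract_E_le char_time_nonneg
      by (intro mult_left_mono divide_right_mono power_mono) auto
    finally show "\<bar>F (retract_E (char_point v s))\<bar> \<le> P \<bar>s\<bar>" by (simp add: time[OF s] P_def)
  qed
  also have "\<dots> \<le> D * (a + \<bar>t\<bar>) ^ Suc n / fact (Suc n)"
    unfolding P_def by (rule integral_shifted_power_le) (auto simp: a_def D)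
  also have "a + \<bar>t\<bar> = char_time p"
    using time[of t] by (simp add: p_eq)
  finally show ?thesis .
qed

section \<open>The kernel system\<close>

text \<open>Both coupled pairs of \<open>kernel_system\<close> are instances of \<open>half_system\<close>, the second one with
  \<open>lam\<close> and \<open>mu\<close> exchanged. In the fixed-point form \<open>kernel_op\<close> integrates \<open>L\<^sub>1\<close> from the
  antidiagonal and, after the reflection, \<open>L\<^sub>2\<close> from the diagonal, where it takes the value \<open>h\<close>.\<close>

definition kernel_op ::
  "(real \<Rightarrow> real) \<Rightarrow> (real \<Rightarrow> real) \<Rightarrow> (real \<Rightarrow> real) \<Rightarrow> (real \<Rightarrow> real) \<Rightarrow>
   (real \<times> real \<Rightarrow> real \<times> real) \<Rightarrow> real \<times> real \<Rightarrow> real \<times> real" where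
  "kernel_op \<alpha>1 \<beta>1 \<alpha>2 \<beta>2 u p =
    (char_integral (lin_comb \<alpha>1 \<beta>1 u) p, char_integral (\<lambda>q. lin_comb \<alpha>2 \<beta>2 u (reflect q)) (reflect p))"

definition boundary_term :: "(real \<Rightarrow> real) \<Rightarrow> real \<times> real \<Rightarrow> real \<times> real" where
  "boundary_term h p = (0, h (clip (fst (char_coords (reflect p)))))"

definition half_system ::
  "(real \<Rightarrow> real) \<Rightarrow> (real \<Rightarrow> real) \<Rightarrow> (real \<Rightarrow> real) \<Rightarrow> (real \<Rightarrow> real) \<Rightarrow> (real \<Rightarrow> real) \<Rightarrow>
   (real \<times> real \<Rightarrow> real) \<Rightarrow> (real \<times> real \<Rightarrow> real) \<Rightarrow> bool" where
  "half_system \<alpha>1 \<beta>1 \<alpha>2 \<beta>2 h L1 L2 \<longleftrightarrow> continuous_on E_dom L1 \<and> continuous_on E_dom L2 \<and>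
     solves_char lam lam (\<lambda>p. \<alpha>1 (fst p) * L1 p + \<beta>1 (fst p) * L2 p) L1 \<and>
     solves_char lam (\<lambda>z. - mu z) (\<lambda>p. \<alpha>2 (fst p) * L1 p + \<beta>2 (fst p) * L2 p) L2 \<and>
     (\<forall>w\<in>{-1..1}. L1 (- w, w) = 0 \<and> L2 (w, w) = h w)"

lemma continuous_on_boundary_term:
  "continuous_on {-1..1} h \<Longrightarrow> continuous_on S (boundary_term h)"
  unfolding boundary_term_def
  by (intro continuous_intros continuous_on_compose2[of "{-1..1}" h _ "\<lambda>p. clip (fst (char_coords (reflect p)))"])
     (auto intro: continuous_intros clip_in)

context
  fixes \<alpha>1 \<beta>1 \<alpha>2 \<beta>2 :: "real \<Rightarrow> real"
  assumes coeffs: "continuous_on {-1..1} \<alpha>1" "continuous_on {-1..1} \<beta>1"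
    "continuous_on {-1..1} \<alpha>2" "continuous_on {-1..1} \<beta>2"
begin

lemma continuous_on_lin_comb_reflect:
  "continuous_on E_dom u \<Longrightarrow> continuous_on E_dom (\<lambda>q. lin_comb \<alpha>2 \<beta>2 u (reflect q))"
  by (rule continuous_on_compose_E_dom[OF continuous_on_lin_comb[OF coeffs(3,4)]])
     (auto intro: continuous_intros)

lemma continuous_on_kernel_op:
  "continuous_on E_dom u \<Longrightarrow> continuous_on S (kernel_op \<alpha>1 \<beta>1 \<alpha>2 \<beta>2 u)"
  unfolding kernel_op_def
  by (intro continuous_on_Pair continuous_on_char_integral continuous_on_lin_comb coeffs
      continuous_on_compose2[OF continuous_on_char_integral continuous_on_reflect[OF continuous_on_id]]
      continuous_on_lin_comb_reflect) auto

lemma kernel_op_diff: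
  assumes "continuous_on E_dom u" "continuous_on E_dom u'"
  shows "kernel_op \<alpha>1 \<beta>1 \<alpha>2 \<beta>2 u p - kernel_op \<alpha>1 \<beta>1 \<alpha>2 \<beta>2 u' p =
    kernel_op \<alpha>1 \<beta>1 \<alpha>2 \<beta>2 (\<lambda>q. u q - u' q) p"
  unfolding kernel_op_def
  by (simp add: char_integral_diff continuous_on_lin_comb[OF coeffs(1,2)] continuous_on_lin_comb_reflect
      assms lin_comb_diff)

lemma kernel_op_volterra_bounded:
  assumes A: "\<And>z. z \<in> {-1..1} \<Longrightarrow> \<bar>\<alpha>1 z\<bar> + \<bar>\<beta>1 z\<bar> \<le> A \<and> \<bar>\<alpha>2 z\<bar> + \<bar>\<beta>2 z\<bar> \<le> A" and "0 \<le> A"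
  shows "volterra_bounded E_dom char_time (2 * A) (kernel_op \<alpha>1 \<beta>1 \<alpha>2 \<beta>2)"
  unfolding volterra_bounded_def
proof (intro allI impI ballI)
  fix u :: "real \<times> real \<Rightarrow> real \<times> real" and C :: real and n p
  assume u: "continuous_on E_dom u" and "0 \<le> C" and p: "p \<in> E_dom"
    and u_le: "\<forall>q\<in>E_dom. norm (u q) \<le> C * char_time q ^ n / fact n"
  have lin_le: "\<bar>lin_comb \<alpha> \<beta> u q\<bar> \<le> (A * C) * char_time q ^ n / fact n"
    if "q \<in> E_dom" and "\<bar>\<alpha> (fst q)\<bar> + \<bar>\<beta> (fst q)\<bar> \<le> A" for \<alpha> \<beta> q
    using abs_lin_comb_le[where u=u and \<alpha>=\<alpha> and \<beta>=\<beta> and q=q, OF that(2)]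
      mult_left_mono[OF u_le[rule_format, OF that(1)] \<open>0 \<le> A\<close>]
    by simp
  have "\<bar>lin_comb \<alpha>1 \<beta>1 u q\<bar> \<le> (A * C) * char_time q ^ n / fact n"
    "\<bar>lin_comb \<alpha>2 \<beta>2 u (reflect q)\<bar> \<le> (A * C) * char_time q ^ n / fact n"
    if q: "q \<in> E_dom" for q
  proof -
    have "fst q \<in> {-1..1}" "fst (reflect q) \<in> {-1..1}" using q by (auto simp: mem_E_dom_iff reflect_def)
    then show "\<bar>lin_comb \<alpha>1 \<beta>1 u q\<bar> \<le> (A * C) * char_time q ^ n / fact n"
      "\<bar>lin_comb \<alpha>2 \<beta>2 u (reflect q)\<bar> \<le> (A * C) * char_time q ^ n / fact n"
      using lin_le[where q=q] lin_le[where q="reflect q"] q A by auto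
  qed
  then have "\<bar>fst (kernel_op \<alpha>1 \<beta>1 \<alpha>2 \<beta>2 u p)\<bar> \<le> (A * C) * char_time p ^ Suc n / fact (Suc n)"
    "\<bar>snd (kernel_op \<alpha>1 \<beta>1 \<alpha>2 \<beta>2 u p)\<bar> \<le> (A * C) * char_time p ^ Suc n / fact (Suc n)"
    unfolding kernel_op_def fst_conv snd_conv
    using abs_char_integral_le[OF continuous_on_lin_comb[OF coeffs(1,2) u]]
      abs_char_integral_le[OF continuous_on_lin_comb_reflect[OF u], of _ _ "reflect p"]
      p \<open>0 \<le> A\<close> \<open>0 \<le> C\<close> by auto
  then show "norm (kernel_op \<alpha>1 \<beta>1 \<alpha>2 \<beta>2 u p) \<le> 2 * A * C * char_time p ^ Suc n / fact (Suc n)"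
    using norm_Pair_le[of "fst (kernel_op \<alpha>1 \<beta>1 \<alpha>2 \<beta>2 u p)" "snd (kernel_op \<alpha>1 \<beta>1 \<alpha>2 \<beta>2 u p)"]
    by simp
qed

lemma half_system_iff_fixed_point:
  fixes M1 M2 :: "real \<times> real \<Rightarrow> real"
  assumes M: "continuous_on E_dom M1" "continuous_on E_dom M2"
  shows "half_system \<alpha>1 \<beta>1 \<alpha>2 \<beta>2 h M1 M2 \<longleftrightarrow>
    (\<forall>p\<in>E_dom. (M1 p, M2 p) = boundary_term h p + kernel_op \<alpha>1 \<beta>1 \<alpha>2 \<beta>2 (\<lambda>q. (M1 q, M2 q)) p)"
proof -
  define u where "u = (\<lambda>q. (M1 q, M2 q))"
  have u: "continuous_on E_dom u" unfolding u_def using M by (intro continuous_on_Pair)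
  have F: "(\<lambda>p. \<alpha> (fst p) * M1 p + \<beta> (fst p) * M2 p) = lin_comb \<alpha> \<beta> u" for \<alpha> \<beta>
    by (simp add: lin_comb_def u_def fun_eq_iff)
  have "(\<forall>p\<in>E_dom. (M1 p, M2 p) = boundary_term h p + kernel_op \<alpha>1 \<beta>1 \<alpha>2 \<beta>2 u p) \<longleftrightarrow>
      (\<forall>p\<in>E_dom. M1 p = char_integral (lin_comb \<alpha>1 \<beta>1 u) p) \<and>
      (\<forall>p\<in>E_dom. M2 p = h (clip (fst (char_coords (reflect p)))) +
         char_integral (\<lambda>q. lin_comb \<alpha>2 \<beta>2 u (reflect q)) (reflect p))"
    by (auto simp: kernel_op_def boundary_term_def)
  then show ?thesis
    unfolding half_system_def F u_def[symmetric]
    using solves_char_boundary_iff[OF continuous_on_lin_comb[OF coeffs(1,2) u], of M1 "\<lambda>_. 0"]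
      solves_char_reflect_boundary_iff[OF continuous_on_lin_comb[OF coeffs(3,4) u], of M2 h] M
    by auto
qed

theorem half_system_unique_solution:
  assumes h: "continuous_on {-1..1} h"
  shows "\<exists>L1 L2. half_system \<alpha>1 \<beta>1 \<alpha>2 \<beta>2 h L1 L2 \<and>
     (\<forall>M1 M2. half_system \<alpha>1 \<beta>1 \<alpha>2 \<beta>2 h M1 M2 \<longrightarrow> (\<forall>p\<in>E_dom. M1 p = L1 p \<and> M2 p = L2 p))"
proof -
  obtain A where A: "A > 0" "\<And>z. z \<in> {-1..1} \<Longrightarrow> norm (\<bar>\<alpha>1 z\<bar> + \<bar>\<beta>1 z\<bar> + \<bar>\<alpha>2 z\<bar> + \<bar>\<beta>2 z\<bar>) \<le> A"
    using compact_imp_bounded[OF compact_continuous_image[OF _ compact_Icc]] coeffs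
    by (metis (no_types, lifting) bounded_pos continuous_on_add continuous_on_rabs image_eqI)
  then have T: "volterra_bounded E_dom char_time (2 * A) (kernel_op \<alpha>1 \<beta>1 \<alpha>2 \<beta>2)"
    by (intro kernel_op_volterra_bounded) force+
  have "\<exists>u. continuous_on E_dom u \<and> (\<forall>p\<in>E_dom. u p = boundary_term h p + kernel_op \<alpha>1 \<beta>1 \<alpha>2 \<beta>2 u p)"
  proof (rule volterra_fixed_point_exists[OF compact_E_dom _ _ T])
    show "0 \<le> char_time p \<and> char_time p \<le> \<bar>phi 1\<bar> + \<bar>phi (- 1)\<bar>" if "p \<in> E_dom" for p
      using char_time_nonneg char_time_le[OF that] by blast
  qed (use A(1) kernel_op_diff continuous_on_kernel_op continuous_on_boundary_term[OF h] in auto)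
  then obtain u where u: "continuous_on E_dom u"
    "\<And>p. p \<in> E_dom \<Longrightarrow> u p = boundary_term h p + kernel_op \<alpha>1 \<beta>1 \<alpha>2 \<beta>2 u p"
    by blast
  show ?thesis
  proof (intro exI conjI allI impI ballI)
    have "continuous_on E_dom (\<lambda>p. fst (u p))" "continuous_on E_dom (\<lambda>p. snd (u p))"
      using u(1) by (auto intro: continuous_intros)
    then have "half_system \<alpha>1 \<beta>1 \<alpha>2 \<beta>2 h (\<lambda>p. fst (u p)) (\<lambda>p. snd (u p)) \<longleftrightarrow>
        (\<forall>p\<in>E_dom. u p = boundary_term h p + kernel_op \<alpha>1 \<beta>1 \<alpha>2 \<beta>2 u p)"
      by (simp add: half_system_iff_fixed_point)
    with u(2) show "half_system \<alpha>1 \<beta>1 \<alpha>2 \<beta>2 h (\<lambda>p. fst (u p)) (\<lambda>p. snd (u p))" by blast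
    fix M1 M2 p assume M: "half_system \<alpha>1 \<beta>1 \<alpha>2 \<beta>2 h M1 M2" and p: "p \<in> E_dom"
    have M_cont: "continuous_on E_dom M1" "continuous_on E_dom M2" using M by (simp_all add: half_system_def)
    then have "\<forall>p\<in>E_dom. (M1 p, M2 p) = boundary_term h p + kernel_op \<alpha>1 \<beta>1 \<alpha>2 \<beta>2 (\<lambda>q. (M1 q, M2 q)) p"
      using M half_system_iff_fixed_point by blast
    then have eq: "(M1 p, M2 p) = u p"
      using A(1) by (intro volterra_fixed_point_unique[OF compact_E_dom T _ kernel_op_diff u
          continuous_on_Pair[OF M_cont] _ p]) auto
    show "M1 p = fst (u p)" by (simp add: eq[symmetric])
    show "M2 p = snd (u p)" by (simp add: eq[symmetric])
  qed
qed

end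

end

lemma kernel_system_iff_half_systems:
  assumes "char_setting lam mu" "char_setting mu lam"
  shows "kernel_system lam lam' mu mu' b c L11 L12 L21 L22 \<longleftrightarrow>
     char_setting.half_system lam mu (\<lambda>z. - lam' z) (\<lambda>z. - c z) (\<lambda>z. - b z) mu'
       (\<lambda>w. b w / (lam w + mu w)) L11 L12 \<and>
     char_setting.half_system mu lam (\<lambda>z. - mu' z) b c lam' (\<lambda>w. - c w / (lam w + mu w)) L22 L21"
proof -
  have "(\<lambda>p. - lam' (fst p) * X p + - c (fst p) * Y p) = (\<lambda>p. - lam' (fst p) * X p - c (fst p) * Y p)"
    "(\<lambda>p. - mu' (fst p) * Y p + b (fst p) * X p) = (\<lambda>p. b (fst p) * X p - mu' (fst p) * Y p)"
    "(\<lambda>p. c (fst p) * Y p + lam' (fst p) * X p) = (\<lambda>p. lam' (fst p) * X p + c (fst p) * Y p)"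
    for X Y :: "real \<times> real \<Rightarrow> real"
    by (auto simp: fun_eq_iff)
  then show ?thesis
    unfolding kernel_system_def char_setting.half_system_def[OF assms(1)]
      char_setting.half_system_def[OF assms(2)] by auto
qed

theorem theorem1:
  fixes lam lam' mu mu' b c :: "real \<Rightarrow> real"
  assumes lam_pos: "\<forall>x\<in>{-1..1}. lam x > 0"
    and mu_pos: "\<forall>x\<in>{-1..1}. mu x > 0"
    and lam_deriv: "\<forall>x\<in>{-1..1}. (lam has_real_derivative lam' x) (at x within {-1..1})"
    and lam'_cont: "continuous_on {-1..1} lam'"
    and mu_deriv: "\<forall>x\<in>{-1..1}. (mu has_real_derivative mu' x) (at x within {-1..1})"
    and mu'_cont: "continuous_on {-1..1} mu'"
    and lam_mu: "\<forall>w\<in>{-1..1}. lam w = mu (-w)"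
    and b_cont: "continuous_on {-1..1} b"
    and c_cont: "continuous_on {-1..1} c"
  shows "\<exists>L11 L12 L21 L22.
           kernel_system lam lam' mu mu' b c L11 L12 L21 L22 \<and>
           (\<forall>M11 M12 M21 M22. kernel_system lam lam' mu mu' b c M11 M12 M21 M22 \<longrightarrow>
              (\<forall>p\<in>E_dom. M11 p = L11 p \<and> M12 p = L12 p \<and> M21 p = L21 p \<and> M22 p = L22 p))"
proof -
  have lam_cont: "continuous_on {-1..1} lam" and mu_cont: "continuous_on {-1..1} mu"
    using lam_deriv mu_deriv by (auto intro: DERIV_continuous_on)
  interpret first: char_setting lam mu
    using lam_pos lam_cont lam_mu by unfold_locales
  have "\<forall>w\<in>{-1..1}. mu w = lam (- w)"
    using lam_mu by (force simp: ball_conj_distrib)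
  with mu_pos mu_cont interpret second: char_setting mu lam
    by unfold_locales
  have "continuous_on {-1..1} (\<lambda>w. b w / (lam w + mu w))"
    "continuous_on {-1..1} (\<lambda>w. - c w / (lam w + mu w))"
    using b_cont c_cont lam_cont mu_cont lam_pos mu_pos
    by (auto intro!: continuous_intros simp: add_pos_pos[THEN less_imp_neq, symmetric])
  from first.half_system_unique_solution[OF continuous_on_minus[OF lam'_cont]
      continuous_on_minus[OF c_cont] continuous_on_minus[OF b_cont] mu'_cont this(1)]
    second.half_system_unique_solution[OF continuous_on_minus[OF mu'_cont] b_cont c_cont lam'_cont this(2)]
  show ?thesis
    unfolding kernel_system_iff_half_systems[OF first.char_setting_axioms second.char_setting_axioms]
    by blast
qed

end
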